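(* Let $\mathbf{C}=\mathbf{C}_1\,\dot\cup\,\mathbf{C}_2$ and $\mathbf{B}\in\dot{\mathbb{P}}(\mathbb{L}(\mathbf{C}_1))$ with $|\mathbf{B}|=|\mathbf{C}_1|$. Then $\mathbf{B}$ is singular for $\mathcal{D}(\mathbf{C},\Omega)$ if and only if there exists $\omega^*\in\Omega$ such that for all values $\mathbf{c}_2^*$ of $\mathbf{C}_2$ and all values $\mathbf{b}$ of the literals of $\mathbf{B}$: $D_{\mathbf{B}=\mathbf{b},\mathbf{C}_2=\mathbf{c}_2^*}(\omega^* )=1$ if and only if $\mathbf{b}=\mathbf{1}$. (Equivalently, $D_{\mathbf{c}}(\omega^* )=(\bigwedge(\mathbf{B}))_{\mathbf{c}}$ for all $\mathbf{c}$.)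
   Context: Events are binary random variables on a population $\Omega$; $\overline{X}=1-X$; $\mathbb{L}(\mathbf{C})=\mathbf{C}\cup\{\overline{X}:X\in\mathbf{C}\}$; $\dot{\mathbb{P}}(\mathbb{L}(\mathbf{C}))$ is the set of subsets of $\mathbb{L}(\mathbf{C})$ not containing both $X$ and $\overline{X}$; $(L)_{\mathbf{c}}$ is the value of literal $L$ under assignment $\mathbf{c}$; $\bigwedge(\mathbf{B})=\min_{L\in\mathbf{B}}L$. Potential outcomes $\mathcal{D}(\mathbf{C},\Omega)$: $D_{\mathbf{c}}(\omega)\in\{0,1\}$. Since $|\mathbf{B}|=|\mathbf{C}_1|$, values $\mathbf{b}$ for the literals of $\mathbf{B}$ determine an assignment to $\mathbf{C}_1$. $\mathbf{B}\subseteq\mathbb{L}(\mathbf{C})$ is a sufficient cause for $D$ relative to $\mathbf{C}$ for $\omega^*$ if some $\mathbf{c}^*$ has $(\bigwedge(\mathbf{B}))_{\mathbf{c}^*}=1$ and $D_{\mathbf{c}}(\omega^* )=1$ for every $\mathbf{c}$ with $(\bigwedge(\mathbf{B}))_{\mathbf{c}}=1$; it is minimal if no proper subset is a sufficient cause for $\omega^*$. A minimal sufficient cause $\mathbf{B}$ for $\omega^*$ is singular (relative to $\mathbf{C}$, for $\omega^*$) if there is no $\mathbf{B}'\in\dot{\mathbb{P}}(\mathbb{L}(\mathbf{C}))$, $\mathbf{B}'\neq\mathbf{B}$, that is also a minimal sufficient cause for $D$ relative to $\mathbf{C}$ for $\omega^*$. $\mathbf{B}$ is singular for $\mathcal{D}(\mathbf{C},\Omega)$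 if it is singular for some $\omega^*\in\Omega$. *)

theory Defs
  imports Main
begin

(* A literal is a pair (X, p): (X, True) is X,
   (X, False) is the complement of X.  Potential outcomes are
   D :: 'w => ('v => bool) => bool, D w c being D_c(w). *)

definition assignments :: "'v set \<Rightarrow> ('v \<Rightarrow> bool) set" where
  "assignments C = {c. \<forall>x. x \<notin> C \<longrightarrow> c x = False}"

definition lits :: "'v set \<Rightarrow> ('v \<times> bool) set" where
  "lits C = C \<times> (UNIV :: bool set)"

definition compl_lit :: "'v \<times> bool \<Rightarrow> 'v \<times> bool" where
  "compl_lit L = (fst L, \<not> snd L)"

definition consistent_lits :: "'v set \<Rightarrow> ('v \<times> bool) set set" where
  "consistent_lits C = {B. B \<subseteq> lits C \<and> (\<forall>L\<in>B. compl_lit L \<notin> B)}"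

definition lit_val :: "('v \<Rightarrow> bool) \<Rightarrow> 'v \<times> bool \<Rightarrow> bool" where
  "lit_val c L = (c (fst L) = snd L)"

definition conj_val :: "('v \<times> bool) set \<Rightarrow> ('v \<Rightarrow> bool) \<Rightarrow> bool" where
  "conj_val B c = (\<forall>L\<in>B. lit_val c L)"

definition sufficient_cause ::
  "'v set \<Rightarrow> ('w \<Rightarrow> ('v \<Rightarrow> bool) \<Rightarrow> bool) \<Rightarrow> ('v \<times> bool) set \<Rightarrow> 'w \<Rightarrow> bool" where
  "sufficient_cause C D B w \<longleftrightarrow>
     B \<subseteq> lits C \<and>
     (\<exists>c\<in>assignments C. conj_val B c) \<and>
     (\<forall>c\<in>assignments C. conj_val B c \<longrightarrow> D w c)"

definition minimal_sufficient_cause ::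
  "'v set \<Rightarrow> ('w \<Rightarrow> ('v \<Rightarrow> bool) \<Rightarrow> bool) \<Rightarrow> ('v \<times> bool) set \<Rightarrow> 'w \<Rightarrow> bool" where
  "minimal_sufficient_cause C D B w \<longleftrightarrow>
     sufficient_cause C D B w \<and> (\<forall>B'. B' \<subset> B \<longrightarrow> \<not> sufficient_cause C D B' w)"

definition singular_at ::
  "'v set \<Rightarrow> ('w \<Rightarrow> ('v \<Rightarrow> bool) \<Rightarrow> bool) \<Rightarrow> ('v \<times> bool) set \<Rightarrow> 'w \<Rightarrow> bool" where
  "singular_at C D B w \<longleftrightarrow>
     minimal_sufficient_cause C D B w \<and>
     (\<forall>B'\<in>consistent_lits C. B' \<noteq> B \<longrightarrow> \<not> minimal_sufficient_cause C D B' w)"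

definition singular ::
  "'v set \<Rightarrow> 'w set \<Rightarrow> ('w \<Rightarrow> ('v \<Rightarrow> bool) \<Rightarrow> bool) \<Rightarrow> ('v \<times> bool) set \<Rightarrow> bool" where
  "singular C \<Omega> D B \<longleftrightarrow> (\<exists>w\<in>\<Omega>. singular_at C D B w)"

(* The assignment to C1 \<union> C2 given by values b of the literals of B (one literal per
   variable of C1) and an assignment c2 to C2: a variable X \<in> C1 with literal (X,p) \<in> B
   gets the value making that literal equal to b (X,p). *)
definition joint_assignment ::
  "'v set \<Rightarrow> ('v \<times> bool) set \<Rightarrow> ('v \<times> bool \<Rightarrow> bool) \<Rightarrow> ('v \<Rightarrow> bool) \<Rightarrow> ('v \<Rightarrow> bool)" where
  "joint_assignment C1 B b c2 =
     (\<lambda>X. if X \<in> C1 then (\<exists>p. (X, p) \<in> B \<and> b (X, p) = p) else c2 X)"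

end

theory Submission
  imports Defs
begin

text \<open>For any finite C and consistent B \<subseteq> L(C), B is the unique minimal sufficient
cause at w iff D_c(w) = (\<And>B)_c for all c. If the equation holds, flipping one variable of
a satisfying assignment shows that every sufficient cause contains B, so B is minimal
and nothing else is. Conversely, if D_c(w) holds but (\<And>B)_c fails, the complete set of
literals of c is a sufficient cause; a minimal one inside it is still satisfied by c,
hence differs from B, contradicting singularity. The hypothesis |B| = |C1| says every
variable of C1 occurs in B, so assignments to C1 \<union> C2 are exactly the joint
assignments (b, c2).\<close>

definition outcome_is_conj ::
  "'v set \<Rightarrow> ('w \<Rightarrow> ('v \<Rightarrow> bool) \<Rightarrow> bool) \<Rightarrow> ('v \<times> bool) set \<Rightarrow> 'w \<Rightarrow> bool" where
  "outcome_is_conj C D B w \<longleftrightarrow> (\<forall>c\<in>assignments C. D w c \<longleftrightarrow> conj_val B c)"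

lemma consistent_lits_same_var:
  assumes "B \<in> consistent_lits C" "(X, p) \<in> B" "(X, q) \<in> B"
  shows "p = q"
  using assms by (cases p; cases q) (auto simp: consistent_lits_def compl_lit_def)

lemma consistent_lits_var_in:
  assumes "B \<in> consistent_lits C" "(X, p) \<in> B"
  shows "X \<in> C"
  using assms by (auto simp: consistent_lits_def lits_def)

lemma consistent_lits_mono:
  assumes "B \<in> consistent_lits C" "B' \<subseteq> B" "C \<subseteq> C'"
  shows "B' \<in> consistent_lits C'"
  using assms by (auto simp: consistent_lits_def lits_def)

lemma consistent_lits_satisfiable:
  assumes "B \<in> consistent_lits C"
  shows "\<exists>c\<in>assignments C. conj_val B c"
proof
  let ?c = "\<lambda>X. X \<in> C \<and> (X, True) \<in> B"
  show "?c \<in> assignments C" by (simp add: assignments_def)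
  show "conj_val B ?c"
    using assms consistent_lits_same_var[OF assms] consistent_lits_var_in[OF assms]
    by (auto simp: conj_val_def lit_val_def) (metis (full_types))
qed

lemma consistent_lits_vars_eq:
  assumes "finite C" "B \<in> consistent_lits C" "card B = card C"
  shows "fst ` B = C"
proof (rule card_subset_eq[OF assms(1)])
  show "fst ` B \<subseteq> C" using assms(2) by (auto simp: consistent_lits_def lits_def)
  have "inj_on fst B"
  proof (rule inj_onI)
    fix L M assume "L \<in> B" "M \<in> B" "fst L = fst M"
    then have "(fst L, snd L) \<in> B" "(fst L, snd M) \<in> B" by (metis prod.collapse)+
    then have "snd L = snd M" by (rule consistent_lits_same_var[OF assms(2)])
    with \<open>fst L = fst M\<close> show "L = M" by (simp add: prod_eq_iff)
  qed
  then show "card (fst ` B) = card C" using assms(3) by (simp add: card_image)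
qed

lemma sufficient_cause_has_minimal_subset:
  assumes "finite F" "sufficient_cause C D F w"
  shows "\<exists>M\<subseteq>F. minimal_sufficient_cause C D M w"
  using assms
proof (induction F rule: finite_psubset_induct)
  case (psubset F)
  show ?case
  proof (cases "minimal_sufficient_cause C D F w")
    case True
    then show ?thesis by blast
  next
    case False
    then obtain B' where B': "B' \<subset> F" "sufficient_cause C D B' w"
      using psubset.prems unfolding minimal_sufficient_cause_def by blast
    then obtain M where "M \<subseteq> B'" "minimal_sufficient_cause C D M w"
      using psubset.IH by blast
    with B'(1) show ?thesis by blast
  qed
qed

definition assignment_lits :: "'v set \<Rightarrow> ('v \<Rightarrow> bool) \<Rightarrow> ('v \<times> bool) set" where
  "assignment_lits C c = (\<lambda>X. (X, c X)) ` C"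

lemma assignment_lits_consistent: "assignment_lits C c \<in> consistent_lits C"
  by (auto simp: assignment_lits_def consistent_lits_def lits_def compl_lit_def)

lemma conj_val_assignment_lits:
  assumes "c \<in> assignments C" "c' \<in> assignments C"
  shows "conj_val (assignment_lits C c) c' \<longleftrightarrow> c' = c"
proof
  assume conj: "conj_val (assignment_lits C c) c'"
  show "c' = c"
  proof
    fix X show "c' X = c X"
      using assms conj by (cases "X \<in> C")
        (auto simp: assignments_def conj_val_def lit_val_def assignment_lits_def)
  qed
qed (auto simp: conj_val_def lit_val_def assignment_lits_def)

lemma sufficient_cause_assignment_lits:
  assumes "c \<in> assignments C" "D w c"
  shows "sufficient_cause C D (assignment_lits C c) w"
  unfolding sufficient_cause_def
proof (intro conjI ballI impI)
  show "assignment_lits C c \<subseteq> lits C"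
    using assignment_lits_consistent[of C c] by (simp add: consistent_lits_def)
  show "\<exists>c'\<in>assignments C. conj_val (assignment_lits C c) c'"
    using assms(1) conj_val_assignment_lits[OF assms(1) assms(1)] by blast
  show "D w c'" if "c' \<in> assignments C" "conj_val (assignment_lits C c) c'" for c'
    using conj_val_assignment_lits[OF assms(1) that(1)] that(2) assms(2) by simp
qed

lemma outcome_is_conj_sufficient_cause_superset:
  assumes "B \<subseteq> lits C" "outcome_is_conj C D B w" "sufficient_cause C D B' w"
  shows "B \<subseteq> B'"
proof
  fix L assume "L \<in> B"
  obtain X p where L: "L = (X, p)" by (cases L)
  have X: "X \<in> C" using assms(1) \<open>L \<in> B\<close> L by (auto simp: lits_def)
  show "L \<in> B'"
  proof (rule ccontr)
    assume "L \<notin> B'"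
    obtain c where c: "c \<in> assignments C" "conj_val B' c"
      using assms(3) by (auto simp: sufficient_cause_def)
    have "conj_val B c"
      using assms(2,3) c by (auto simp: outcome_is_conj_def sufficient_cause_def)
    then have "c X = p" using \<open>L \<in> B\<close> L by (auto simp: conj_val_def lit_val_def)
    have flipped_sat: "conj_val B' (c(X := \<not> c X))"
      unfolding conj_val_def
    proof
      fix M assume "M \<in> B'"
      obtain Y q where M: "M = (Y, q)" by (cases M)
      show "lit_val (c(X := \<not> c X)) M"
      proof (cases "Y = X")
        case True
        then have "q = (\<not> p)" using \<open>M \<in> B'\<close> M \<open>L \<notin> B'\<close> L by (cases q; cases p) auto
        with True M \<open>c X = p\<close> show ?thesis by (simp add: lit_val_def)
      next
        case False
        with c(2) \<open>M \<in> B'\<close> M show ?thesis by (auto simp: conj_val_def lit_val_def)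
      qed
    qed
    have "c(X := \<not> c X) \<in> assignments C" using c(1) X by (auto simp: assignments_def)
    then have "conj_val B (c(X := \<not> c X))"
      using assms(2,3) flipped_sat by (auto simp: outcome_is_conj_def sufficient_cause_def)
    then show False using \<open>L \<in> B\<close> L \<open>c X = p\<close> by (auto simp: conj_val_def lit_val_def)
  qed
qed

lemma singular_at_imp_outcome_is_conj:
  assumes "finite C" "singular_at C D B w"
  shows "outcome_is_conj C D B w"
  unfolding outcome_is_conj_def
proof (intro ballI iffI)
  fix c assume c: "c \<in> assignments C"
  have suff: "sufficient_cause C D B w"
    using assms(2) by (simp add: singular_at_def minimal_sufficient_cause_def)
  then show "conj_val B c \<Longrightarrow> D w c" using c by (simp add: sufficient_cause_def)
  assume "D w c"
  show "conj_val B c"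
  proof (rule ccontr)
    assume not_B: "\<not> conj_val B c"
    obtain M where M: "M \<subseteq> assignment_lits C c" "minimal_sufficient_cause C D M w"
      using sufficient_cause_has_minimal_subset[of "assignment_lits C c" C D w]
        sufficient_cause_assignment_lits[of c C D w] c \<open>D w c\<close> assms(1)
      by (auto simp: assignment_lits_def)
    have "conj_val M c" using M(1) by (auto simp: conj_val_def lit_val_def assignment_lits_def)
    then have "M \<noteq> B" using not_B by blast
    moreover have "M \<in> consistent_lits C"
      using consistent_lits_mono[OF assignment_lits_consistent M(1)] by simp
    ultimately show False using assms(2) M(2) by (auto simp: singular_at_def)
  qed
qed

lemma outcome_is_conj_imp_singular_at:
  assumes "B \<in> consistent_lits C" "outcome_is_conj C D B w"
  shows "singular_at C D B w"
proof -
  have lits: "B \<subseteq> lits C" using assms(1) by (simp add: consistent_lits_def)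
  have suff: "sufficient_cause C D B w"
    using lits consistent_lits_satisfiable[OF assms(1)] assms(2)
    by (auto simp: sufficient_cause_def outcome_is_conj_def)
  note superset = outcome_is_conj_sufficient_cause_superset[OF lits assms(2)]
  have "minimal_sufficient_cause C D B w"
    using suff superset by (auto simp: minimal_sufficient_cause_def)
  moreover have "\<not> minimal_sufficient_cause C D B' w" if "B' \<noteq> B" for B'
    using superset[of B'] suff that by (auto simp: minimal_sufficient_cause_def)
  ultimately show ?thesis by (auto simp: singular_at_def)
qed

theorem singular_at_iff_outcome_is_conj:
  assumes "finite C" "B \<in> consistent_lits C"
  shows "singular_at C D B w \<longleftrightarrow> outcome_is_conj C D B w"
  using singular_at_imp_outcome_is_conj[OF assms(1)] outcome_is_conj_imp_singular_at[OF assms(2)]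
  by (rule iffI)

lemma joint_assignment_in_assignments:
  assumes "C1 \<inter> C2 = {}" "c2 \<in> assignments C2"
  shows "joint_assignment C1 B b c2 \<in> assignments (C1 \<union> C2)"
  using assms by (auto simp: assignments_def joint_assignment_def)

lemma conj_val_joint_assignment:
  assumes "B \<in> consistent_lits C1"
  shows "conj_val B (joint_assignment C1 B b c2) \<longleftrightarrow> (\<forall>L\<in>B. b L)"
proof -
  have "lit_val (joint_assignment C1 B b c2) (X, p) \<longleftrightarrow> b (X, p)" if "(X, p) \<in> B" for X p
    using that consistent_lits_var_in[OF assms that] consistent_lits_same_var[OF assms that]
    by (cases p) (auto simp: lit_val_def joint_assignment_def)
  then show ?thesis by (auto simp: conj_val_def)
qed

lemma joint_assignment_restrict:
  assumes "finite C1" "B \<in> consistent_lits C1" "card B = card C1"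
    and "c \<in> assignments (C1 \<union> C2)"
  shows "joint_assignment C1 B (lit_val c) (\<lambda>X. X \<in> C2 \<and> c X) = c"
proof
  fix X
  show "joint_assignment C1 B (lit_val c) (\<lambda>X. X \<in> C2 \<and> c X) X = c X"
  proof (cases "X \<in> C1")
    case True
    then obtain p where "(X, p) \<in> B"
      using consistent_lits_vars_eq[OF assms(1-3)] by force
    then show ?thesis
      using True consistent_lits_same_var[OF assms(2) \<open>(X, p) \<in> B\<close>]
      by (cases p) (auto simp: joint_assignment_def lit_val_def)
  qed (use assms(4) in \<open>auto simp: joint_assignment_def assignments_def\<close>)
qed

lemma outcome_is_conj_iff_joint_assignment:
  assumes "finite C1" "C1 \<inter> C2 = {}" "B \<in> consistent_lits C1" "card B = card C1"
  shows "outcome_is_conj (C1 \<union> C2) D B w \<longleftrightarrow>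
    (\<forall>c2\<in>assignments C2. \<forall>b. D w (joint_assignment C1 B b c2) \<longleftrightarrow> (\<forall>L\<in>B. b L))"
  (is "_ \<longleftrightarrow> ?joint")
proof
  assume "outcome_is_conj (C1 \<union> C2) D B w"
  then show ?joint
    using joint_assignment_in_assignments[OF assms(2)] conj_val_joint_assignment[OF assms(3)]
    by (simp add: outcome_is_conj_def)
next
  assume joint: ?joint
  show "outcome_is_conj (C1 \<union> C2) D B w"
    unfolding outcome_is_conj_def
  proof
    fix c assume c: "c \<in> assignments (C1 \<union> C2)"
    have "(\<lambda>X. X \<in> C2 \<and> c X) \<in> assignments C2" by (simp add: assignments_def)
    with joint have "D w (joint_assignment C1 B (lit_val c) (\<lambda>X. X \<in> C2 \<and> c X))
        \<longleftrightarrow> (\<forall>L\<in>B. lit_val c L)" by blast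
    then show "D w c \<longleftrightarrow> conj_val B c"
      by (simp add: joint_assignment_restrict[OF assms(1,3,4) c] conj_val_def)
  qed
qed

theorem mainTheorem12:
  fixes C1 C2 :: "'v set" and \<Omega> :: "'w set"
    and D :: "'w \<Rightarrow> ('v \<Rightarrow> bool) \<Rightarrow> bool" and B :: "('v \<times> bool) set"
  assumes "finite C1" and "finite C2" and "C1 \<inter> C2 = {}"
    and "B \<in> consistent_lits C1" and "card B = card C1"
  shows "singular (C1 \<union> C2) \<Omega> D B \<longleftrightarrow>
    (\<exists>w\<in>\<Omega>. \<forall>c2\<in>assignments C2. \<forall>b :: 'v \<times> bool \<Rightarrow> bool.
        D w (joint_assignment C1 B b c2) \<longleftrightarrow> (\<forall>L\<in>B. b L))"
proof -
  have "B \<in> consistent_lits (C1 \<union> C2)"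
    using consistent_lits_mono[OF assms(4) subset_refl Un_upper1] .
  moreover have "finite (C1 \<union> C2)" using assms(1,2) by simp
  ultimately have "singular_at (C1 \<union> C2) D B w \<longleftrightarrow>
      (\<forall>c2\<in>assignments C2. \<forall>b. D w (joint_assignment C1 B b c2) \<longleftrightarrow> (\<forall>L\<in>B. b L))" for w
    using singular_at_iff_outcome_is_conj[of "C1 \<union> C2" B D w]
      outcome_is_conj_iff_joint_assignment[OF assms(1,3-5), of D w] by simp
  then show ?thesis unfolding singular_def by (rule bex_cong[OF refl])
qed

end
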